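(* Let $(E,\tau)$ be a violator space. Then $(E,\tau)$ is uniquely generated if and only if $\tau$ satisfies the anti-exchange property: for all $X\subseteq E$ and all distinct $p,q\in E$ with $p,q\notin\tau(X)$, if $p\in\tau(X\cup\{q\})$ then $q\notin\tau(X\cup\{p\})$.
   Context: $E$ is a finite set and $\tau:2^E\to 2^E$. $(E,\tau)$ is a violator space if (C1) $X\subseteq\tau(X)$ for all $X\subseteq E$, and (C22) for all $F,G\subseteq E$, $F\subseteq G\subseteq\tau(F)$ implies $\tau(G)=\tau(F)$. (Equivalently, $V(X)=E-\tau(X)$ satisfies $G\cap V(G)=\emptyset$ and, for $F\subseteq G$ with $G\cap V(F)=\emptyset$, $V(G)=V(F)$.) For $X\subseteq E$, a generator of $X$ is any $B\subseteq E$ with $\tau(B)=\tau(X)$; a basis of $X$ is an inclusion-minimal generator of $X$. The space is uniquely generated if every $X\subseteq E$ has exactly one basis. *)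

theory Defs
  imports Main
begin

definition violator_space :: "'a set \<Rightarrow> ('a set \<Rightarrow> 'a set) \<Rightarrow> bool" where
  "violator_space E \<tau> \<longleftrightarrow> finite E
     \<and> (\<forall>X. X \<subseteq> E \<longrightarrow> \<tau> X \<subseteq> E)
     \<and> (\<forall>X. X \<subseteq> E \<longrightarrow> X \<subseteq> \<tau> X)
     \<and> (\<forall>F G. F \<subseteq> E \<longrightarrow> G \<subseteq> E \<longrightarrow> F \<subseteq> G \<longrightarrow> G \<subseteq> \<tau> F \<longrightarrow> \<tau> G = \<tau> F)"

definition generator :: "'a set \<Rightarrow> ('a set \<Rightarrow> 'a set) \<Rightarrow> 'a set \<Rightarrow> 'a set \<Rightarrow> bool" where
  "generator E \<tau> X B \<longleftrightarrow> B \<subseteq> E \<and> \<tau> B = \<tau> X"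

definition basis :: "'a set \<Rightarrow> ('a set \<Rightarrow> 'a set) \<Rightarrow> 'a set \<Rightarrow> 'a set \<Rightarrow> bool" where
  "basis E \<tau> X B \<longleftrightarrow> generator E \<tau> X B \<and> (\<forall>B'. B' \<subset> B \<longrightarrow> \<not> generator E \<tau> X B')"

definition uniquely_generated :: "'a set \<Rightarrow> ('a set \<Rightarrow> 'a set) \<Rightarrow> bool" where
  "uniquely_generated E \<tau> \<longleftrightarrow> (\<forall>X. X \<subseteq> E \<longrightarrow> (\<exists>!B. basis E \<tau> X B))"

definition anti_exchange :: "'a set \<Rightarrow> ('a set \<Rightarrow> 'a set) \<Rightarrow> bool" where
  "anti_exchange E \<tau> \<longleftrightarrow> (\<forall>X p q. X \<subseteq> E \<longrightarrow> p \<in> E \<longrightarrow> q \<in> E \<longrightarrow> p \<noteq> q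
     \<longrightarrow> p \<notin> \<tau> X \<longrightarrow> q \<notin> \<tau> X \<longrightarrow> p \<in> \<tau> (X \<union> {q}) \<longrightarrow> q \<notin> \<tau> (X \<union> {p}))"

end

theory Submission
  imports Defs
begin

text \<open>Under anti-exchange every basis of \<open>X\<close>
  coincides with the set of extreme points of \<open>\<tau> X\<close>, the elements \<open>e\<close> with
  \<open>\<tau> (\<tau> X - {e}) \<noteq> \<tau> X\<close>; so the basis is unique. The hard inclusion takes a maximal
  \<open>Z \<subseteq> \<tau> X - {e}\<close> containing \<open>B - {e}\<close> with \<open>e \<notin> \<tau> Z\<close>: any \<open>z \<in> \<tau> X - {e}\<close> outside
  \<open>\<tau> Z\<close> would satisfy \<open>e \<in> \<tau> (Z \<union> {z})\<close> by maximality, and \<open>z \<notin> \<tau> (Z \<union> {e}) = \<tau> B\<close> by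
  anti-exchange, which is absurd. Conversely, if \<open>p \<in> \<tau> (X \<union> {q})\<close> and \<open>q \<in> \<tau> (X \<union> {p})\<close>,
  then \<open>X \<union> {p, q}\<close> has a basis inside \<open>X \<union> {q}\<close> and one inside \<open>X \<union> {p}\<close>; if they agree
  the basis lies in \<open>X\<close>, forcing \<open>p \<in> \<tau> X\<close>.\<close>

definition extreme_points :: "('a set \<Rightarrow> 'a set) \<Rightarrow> 'a set \<Rightarrow> 'a set" where
  "extreme_points \<tau> X = {e \<in> \<tau> X. \<tau> (\<tau> X - {e}) \<noteq> \<tau> X}"

lemma violator_space_finite: "violator_space E \<tau> \<Longrightarrow> finite E"
  unfolding violator_space_def by meson

lemma violator_space_subset: "violator_space E \<tau> \<Longrightarrow> X \<subseteq> E \<Longrightarrow> \<tau> X \<subseteq> E"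
  unfolding violator_space_def by meson

lemma violator_space_extensive: "violator_space E \<tau> \<Longrightarrow> X \<subseteq> E \<Longrightarrow> X \<subseteq> \<tau> X"
  unfolding violator_space_def by meson

lemma violator_space_tau_eq:
  "violator_space E \<tau> \<Longrightarrow> G \<subseteq> E \<Longrightarrow> F \<subseteq> G \<Longrightarrow> G \<subseteq> \<tau> F \<Longrightarrow> \<tau> G = \<tau> F"
  unfolding violator_space_def by (meson order_trans)

lemma generator_subset_tau:
  assumes "violator_space E \<tau>" and "generator E \<tau> X B"
  shows "B \<subseteq> \<tau> X"
proof -
  have "B \<subseteq> E" "\<tau> B = \<tau> X" using assms(2) unfolding generator_def by simp_all
  with violator_space_extensive[OF assms(1)] show ?thesis by metis
qed

lemma generator_of_intermediate:
  "violator_space E \<tau> \<Longrightarrow> G \<subseteq> E \<Longrightarrow> F \<subseteq> G \<Longrightarrow> G \<subseteq> \<tau> F \<Longrightarrow> generator E \<tau> G F"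
  unfolding generator_def using violator_space_tau_eq[of E \<tau> G F] by (simp add: subset_trans)

lemma basis_exists_within:
  assumes vs: "violator_space E \<tau>" and "generator E \<tau> X G"
  shows "\<exists>B. B \<subseteq> G \<and> basis E \<tau> X B"
proof -
  let ?A = "{B. B \<subseteq> G \<and> generator E \<tau> X B}"
  have "finite G" using assms violator_space_finite[OF vs] finite_subset unfolding generator_def by blast
  then have "finite ?A" by (rule finite_subset[rotated, OF finite_Pow_iff[THEN iffD2]]) blast
  moreover have "G \<in> ?A" using assms by simp
  ultimately obtain B where B: "B \<in> ?A" and B_min: "\<forall>B'\<in>?A. B' \<le> B \<longrightarrow> B = B'"
    using finite_has_minimal[of ?A] by blast
  have "\<not> generator E \<tau> X B'" if "B' \<subset> B" for B'
    using that B B_min by blast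
  with B have "basis E \<tau> X B" unfolding basis_def by blast
  with B show ?thesis by blast
qed

lemma uniquely_generated_imp_anti_exchange:
  assumes vs: "violator_space E \<tau>" and ug: "uniquely_generated E \<tau>"
  shows "anti_exchange E \<tau>"
  unfolding anti_exchange_def
proof (intro allI impI notI)
  fix X p q
  assume X: "X \<subseteq> E" and "p \<in> E" "q \<in> E" "p \<noteq> q" "p \<notin> \<tau> X" "q \<notin> \<tau> X"
    and p_in: "p \<in> \<tau> (X \<union> {q})" and q_in: "q \<in> \<tau> (X \<union> {p})"
  let ?Y = "X \<union> {p, q}"
  have Y: "?Y \<subseteq> E" using X \<open>p \<in> E\<close> \<open>q \<in> E\<close> by blast
  have "generator E \<tau> ?Y (X \<union> {q})"
  proof (rule generator_of_intermediate[OF vs Y])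
    show "X \<union> {q} \<subseteq> ?Y" by blast
    show "?Y \<subseteq> \<tau> (X \<union> {q})"
      using p_in violator_space_extensive[OF vs, of "X \<union> {q}"] Y by blast
  qed
  then obtain B where B_q: "B \<subseteq> X \<union> {q}" and B: "basis E \<tau> ?Y B"
    using basis_exists_within[OF vs] by blast
  have "generator E \<tau> ?Y (X \<union> {p})"
  proof (rule generator_of_intermediate[OF vs Y])
    show "X \<union> {p} \<subseteq> ?Y" by blast
    show "?Y \<subseteq> \<tau> (X \<union> {p})"
      using q_in violator_space_extensive[OF vs, of "X \<union> {p}"] Y by blast
  qed
  then obtain B' where B'_p: "B' \<subseteq> X \<union> {p}" and B': "basis E \<tau> ?Y B'"
    using basis_exists_within[OF vs] by blast
  have "\<exists>!B. basis E \<tau> ?Y B" using ug Y unfolding uniquely_generated_def by simp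
  then have "B = B'" using B B' by (elim alt_ex1E) simp
  then have "B \<subseteq> X" using B_q B'_p \<open>p \<noteq> q\<close> by blast
  have tau_B: "\<tau> B = \<tau> ?Y" using B unfolding basis_def generator_def by blast
  have "?Y \<subseteq> \<tau> B" using tau_B violator_space_extensive[OF vs Y] by simp
  then have "\<tau> X = \<tau> B" using violator_space_tau_eq[OF vs X \<open>B \<subseteq> X\<close>] by blast
  then show False using \<open>?Y \<subseteq> \<tau> B\<close> \<open>p \<notin> \<tau> X\<close> by blast
qed

lemma extreme_points_subset_generator:
  assumes vs: "violator_space E \<tau>" and X: "X \<subseteq> E" and B: "generator E \<tau> X B"
  shows "extreme_points \<tau> X \<subseteq> B"
proof
  fix e assume e: "e \<in> extreme_points \<tau> X"
  show "e \<in> B"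
  proof (rule ccontr)
    assume "e \<notin> B"
    then have "B \<subseteq> \<tau> X - {e}" using generator_subset_tau[OF vs B] by blast
    moreover have "\<tau> X - {e} \<subseteq> E" using violator_space_subset[OF vs X] by blast
    moreover have "\<tau> B = \<tau> X" using B unfolding generator_def by blast
    ultimately have "\<tau> (\<tau> X - {e}) = \<tau> X" using violator_space_tau_eq[OF vs] by (metis Diff_subset)
    then show False using e unfolding extreme_points_def by blast
  qed
qed

lemma anti_exchangeD:
  assumes "anti_exchange E \<tau>" "X \<subseteq> E" "p \<in> E" "q \<in> E" "p \<noteq> q" "p \<notin> \<tau> X" "q \<notin> \<tau> X"
    "p \<in> \<tau> (X \<union> {q})"
  shows "q \<notin> \<tau> (X \<union> {p})"
  using assms(1)[unfolded anti_exchange_def, rule_format, OF assms(2-8)] .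

lemma basis_element_not_in_tau_remove:
  assumes vs: "violator_space E \<tau>" and B: "basis E \<tau> X B" and "e \<in> B"
  shows "e \<notin> \<tau> (B - {e})"
proof
  assume "e \<in> \<tau> (B - {e})"
  have BE: "B \<subseteq> E" and tau_B: "\<tau> B = \<tau> X" using B unfolding basis_def generator_def by simp_all
  then have "B - {e} \<subseteq> \<tau> (B - {e})" using violator_space_extensive[OF vs, of "B - {e}"] by blast
  with \<open>e \<in> \<tau> (B - {e})\<close> have "B \<subseteq> \<tau> (B - {e})" by blast
  then have "\<tau> B = \<tau> (B - {e})" using violator_space_tau_eq[OF vs BE Diff_subset] by simp
  then have "generator E \<tau> X (B - {e})" using BE tau_B unfolding generator_def by blast
  moreover have "B - {e} \<subset> B" using \<open>e \<in> B\<close> by blast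
  ultimately show False using B unfolding basis_def by simp
qed

lemma anti_exchange_basis_subset_extreme_points:
  assumes vs: "violator_space E \<tau>" and ae: "anti_exchange E \<tau>" and X: "X \<subseteq> E"
    and B: "basis E \<tau> X B"
  shows "B \<subseteq> extreme_points \<tau> X"
proof
  fix e assume "e \<in> B"
  let ?T = "\<tau> X"
  have BE: "B \<subseteq> E" and tau_B: "\<tau> B = ?T" using B unfolding basis_def generator_def by simp_all
  have TE: "?T \<subseteq> E" using violator_space_subset[OF vs X] .
  have BT: "B \<subseteq> ?T" using B generator_subset_tau[OF vs] unfolding basis_def by blast
  have "e \<in> ?T" "e \<in> E" using \<open>e \<in> B\<close> BT BE by blast+
  let ?A = "{Z. B - {e} \<subseteq> Z \<and> Z \<subseteq> ?T - {e} \<and> e \<notin> \<tau> Z}"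
  have "finite ?T" using finite_subset[OF TE violator_space_finite[OF vs]] .
  then have "finite ?A" by (rule finite_subset[rotated, OF finite_Pow_iff[THEN iffD2]]) blast
  moreover have "B - {e} \<in> ?A"
    using basis_element_not_in_tau_remove[OF vs B \<open>e \<in> B\<close>] BT by blast
  ultimately obtain Z where Z: "Z \<in> ?A" and Z_max: "\<forall>Z'\<in>?A. Z \<le> Z' \<longrightarrow> Z = Z'"
    using finite_has_maximal[of ?A] by blast
  have ZE: "Z \<subseteq> E" using Z TE by blast
  have "\<tau> (Z \<union> {e}) = \<tau> B"
  proof (rule violator_space_tau_eq[OF vs])
    show "Z \<union> {e} \<subseteq> E" using ZE \<open>e \<in> E\<close> by blast
    show "B \<subseteq> Z \<union> {e}" using Z by blast
    show "Z \<union> {e} \<subseteq> \<tau> B" using Z tau_B \<open>e \<in> ?T\<close> by blast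
  qed
  with tau_B have tau_Ze: "\<tau> (Z \<union> {e}) = ?T" by simp
  have closed: "?T - {e} \<subseteq> \<tau> Z"
  proof
    fix z assume z: "z \<in> ?T - {e}"
    show "z \<in> \<tau> Z"
    proof (rule ccontr)
      assume "z \<notin> \<tau> Z"
      then have "z \<notin> Z" using violator_space_extensive[OF vs ZE] by blast
      have "Z \<union> {z} \<notin> ?A"
      proof
        assume "Z \<union> {z} \<in> ?A"
        from Z_max[rule_format, OF this Un_upper1] have "Z = Z \<union> {z}" .
        with \<open>z \<notin> Z\<close> show False by blast
      qed
      moreover have "B - {e} \<subseteq> Z \<union> {z}" "Z \<union> {z} \<subseteq> ?T - {e}" using Z z by auto
      ultimately have "e \<in> \<tau> (Z \<union> {z})" by simp
      moreover have "z \<in> E" "e \<noteq> z" "e \<notin> \<tau> Z" using z TE Z by blast+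
      ultimately have "z \<notin> \<tau> (Z \<union> {e})"
        using anti_exchangeD[OF ae ZE \<open>e \<in> E\<close>] \<open>z \<notin> \<tau> Z\<close> by blast
      then show False using tau_Ze z by blast
    qed
  qed
  have "?T - {e} \<subseteq> E" "Z \<subseteq> ?T - {e}" using TE Z by auto
  then have "\<tau> (?T - {e}) = \<tau> Z" using violator_space_tau_eq[OF vs _ _ closed] by simp
  then show "e \<in> extreme_points \<tau> X"
    using Z \<open>e \<in> ?T\<close> unfolding extreme_points_def by force
qed

lemma anti_exchange_basis_eq_extreme_points:
  assumes "violator_space E \<tau>" "anti_exchange E \<tau>" "X \<subseteq> E" "basis E \<tau> X B"
  shows "B = extreme_points \<tau> X"
  using assms anti_exchange_basis_subset_extreme_points extreme_points_subset_generator
  unfolding basis_def by (metis subset_antisym)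

theorem mainTheorem9:
  assumes "violator_space E \<tau>"
  shows "uniquely_generated E \<tau> \<longleftrightarrow> anti_exchange E \<tau>"
proof
  assume "uniquely_generated E \<tau>"
  then show "anti_exchange E \<tau>" using uniquely_generated_imp_anti_exchange assms by blast
next
  assume ae: "anti_exchange E \<tau>"
  show "uniquely_generated E \<tau>"
    unfolding uniquely_generated_def
  proof (intro allI impI)
    fix X assume X: "X \<subseteq> E"
    then have "generator E \<tau> X X" unfolding generator_def by simp
    then obtain B where "basis E \<tau> X B" using basis_exists_within[OF assms] by blast
    then show "\<exists>!B. basis E \<tau> X B"
      using anti_exchange_basis_eq_extreme_points[OF assms ae X] by blast
  qed
qed

end
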